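(* Let $\Omega\subset\mathbb{R}^n$ be a smoothly bounded domain, $0<\beta<1$ and $s\in\mathbb{R}\setminus\{0\}$. Assume $u\in C^{1,\beta}(\overline{\Omega})$ satisfies $\inf_{x\in\overline{\Omega}}|\nabla u(x)|\geq\lambda_1$ for some $\lambda_1>0$. Let, for $0<t<1$, $k_t=\min\{k\in\mathbb{N}: k\geq|\log t|/\log 2\}$. Then: (i) if $s\geq 1$, $\||\nabla u|^s\|_{C^{0,\beta}}\leq\|\nabla u\|_{L^\infty}^s+2s\|\nabla u\|_{C^{0,\beta}}^s$; (ii) if $0<s<1$, $\||\nabla u|^s\|_{C^{0,\beta}}\leq\|\nabla u\|_{L^\infty}^s+\frac{2s}{\prod_{j=1}^{k_s}\lambda_1^{2^{j-1}s}}\|\nabla u\|_{C^{0,\beta}}^{2^{k_s}s}$; (iii) if $-1<s<0$, $\||\nabla u|^s\|_{C^{0,\beta}}\leq\lambda_1^s+\frac{2|s|}{\lambda_1^{2|s|}\prod_{j=1}^{k_{|s|}}\lambda_1^{2^{j-1}|s|}}\|\nabla u\|_{C^{0,\beta}}^{2^{k_{|s|}}|s|}$; (iv) if $s\leq -1$, $\||\nabla u|^s\|_{C^{0,\beta}}\leq\lambda_1^s+2|s|\lambda_1^{2s}\|\nabla u\|_{C^{0,\beta}}^{|s|}$.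
   Context: All norms are over $\Omega$; $|\cdot|$ is the Euclidean norm on $\mathbb{R}^n$. For a (scalar or vector valued) function $w$, $\|w\|_{C^{0,\beta}}=\|w\|_{L^\infty}+\sup_{x\neq y}\frac{|w(x)-w(y)|}{|x-y|^\beta}$. *)

theory Defs
  imports "HOL-Analysis.Analysis"
begin

text \<open>C-infinity functions on the whole space: there is a family of functions containing f,
  all everywhere differentiable, closed under taking partial derivatives.\<close>
definition smooth_fun :: "('a::euclidean_space \<Rightarrow> real) \<Rightarrow> bool" where
  "smooth_fun f \<longleftrightarrow> (\<exists>F. f \<in> F \<and>
      (\<forall>g\<in>F. g differentiable_on UNIV \<and>
         (\<forall>i\<in>Basis. (\<lambda>x. frechet_derivative g (at x) i) \<in> F)))"

definition smooth_bounded_domain :: "'a::euclidean_space set \<Rightarrow> bool" where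
  "smooth_bounded_domain \<Omega> \<longleftrightarrow> open \<Omega> \<and> connected \<Omega> \<and> bounded \<Omega> \<and> \<Omega> \<noteq> {} \<and>
     (\<exists>\<rho>. smooth_fun \<rho> \<and> \<Omega> = {x. \<rho> x < 0} \<and>
        (\<forall>x. \<rho> x = 0 \<longrightarrow> frechet_derivative \<rho> (at x) \<noteq> (\<lambda>h. 0)))"

definition sup_norm :: "'a set \<Rightarrow> ('a \<Rightarrow> 'b::real_normed_vector) \<Rightarrow> real" where
  "sup_norm \<Omega> w = (SUP x\<in>\<Omega>. norm (w x))"

definition holder_seminorm :: "real \<Rightarrow> 'a::metric_space set \<Rightarrow> ('a \<Rightarrow> 'b::real_normed_vector) \<Rightarrow> real" where
  "holder_seminorm \<beta> \<Omega> w =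
     (SUP p\<in>{(x,y). x \<in> \<Omega> \<and> y \<in> \<Omega> \<and> x \<noteq> y}. norm (w (fst p) - w (snd p)) / (dist (fst p) (snd p) powr \<beta>))"

definition holder_norm :: "real \<Rightarrow> 'a::metric_space set \<Rightarrow> ('a \<Rightarrow> 'b::real_normed_vector) \<Rightarrow> real" where
  "holder_norm \<beta> \<Omega> w = sup_norm \<Omega> w + holder_seminorm \<beta> \<Omega> w"

text \<open>u in C^{1,beta}(closure Omega) with gradient Du (on Omega; Du is uniformly
  beta-Hoelder and bounded, hence extends continuously to the closure).\<close>
definition C1_holder :: "real \<Rightarrow> 'a::euclidean_space set \<Rightarrow> ('a \<Rightarrow> real) \<Rightarrow> ('a \<Rightarrow> 'a) \<Rightarrow> bool" where
  "C1_holder \<beta> \<Omega> u Du \<longleftrightarrow> continuous_on (closure \<Omega>) u \<and>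
     (\<forall>x\<in>\<Omega>. (u has_derivative (\<lambda>h. Du x \<bullet> h)) (at x)) \<and>
     bounded (Du ` \<Omega>) \<and>
     (\<exists>C. \<forall>x\<in>\<Omega>. \<forall>y\<in>\<Omega>. norm (Du x - Du y) \<le> C * dist x y powr \<beta>)"

definition k_idx :: "real \<Rightarrow> nat" where
  "k_idx t = (LEAST k::nat. real k \<ge> \<bar>ln t\<bar> / ln 2)"

end

theory Submission
  imports Defs
begin

(* On the domain the values of norm Du lie in [lambda1, M] with M the sup norm of Du.  There
   t powr s is Lipschitz with constant |s| * max (lambda1 powr (s-1)) (M powr (s-1)) by the mean
   value theorem, so with the reverse triangle inequality the Hoelder seminorm of (norm Du) powr s
   is at most this constant times that of Du, while its sup norm is at most the larger endpoint
   value of t powr s.  The four estimates are then elementary: for 0 < |s| < 1 the quotient of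
   the Hoelder seminorm of Du by lambda1 is at most N / lambda1 >= 1, with N the Hoelder norm of
   Du, which may be raised to the power 2 ^ k_idx |s| * |s| >= 1; the product of powers of lambda1
   telescopes to a single power. *)

definition holder_continuous_on ::
    "real \<Rightarrow> 'a::metric_space set \<Rightarrow> ('a \<Rightarrow> 'b::real_normed_vector) \<Rightarrow> bool" where
  "holder_continuous_on \<beta> \<Omega> w \<longleftrightarrow> (\<exists>C. \<forall>x\<in>\<Omega>. \<forall>y\<in>\<Omega>. norm (w x - w y) \<le> C * dist x y powr \<beta>)"

lemma sup_norm_upper:
  assumes "bounded (w ` \<Omega>)" "x \<in> \<Omega>"
  shows "norm (w x) \<le> sup_norm \<Omega> w"
proof -
  have "bdd_above (norm ` w ` \<Omega>)"
    using assms(1) by (simp add: bdd_above_norm)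
  then have "bdd_above ((\<lambda>y. norm (w y)) ` \<Omega>)"
    by (simp add: image_image)
  then show ?thesis unfolding sup_norm_def using assms(2) by (rule cSUP_upper[rotated])
qed

lemma sup_norm_le:
  assumes "\<Omega> \<noteq> {}" "\<And>x. x \<in> \<Omega> \<Longrightarrow> norm (w x) \<le> B"
  shows "sup_norm \<Omega> w \<le> B"
  unfolding sup_norm_def using assms by (rule cSUP_least)

(* holder_seminorm is a Sup over pairs of distinct points; with fewer than two points it is the
   unspecified real Sup {}, hence the two-point hypotheses below. *)

lemma holder_quotient_le_holder_seminorm:
  assumes "holder_continuous_on \<beta> \<Omega> w" "x \<in> \<Omega>" "y \<in> \<Omega>" "x \<noteq> y"
  shows "norm (w x - w y) / dist x y powr \<beta> \<le> holder_seminorm \<beta> \<Omega> w"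
proof -
  obtain C where C: "\<forall>x\<in>\<Omega>. \<forall>y\<in>\<Omega>. norm (w x - w y) \<le> C * dist x y powr \<beta>"
    using assms(1) unfolding holder_continuous_on_def by blast
  let ?q = "\<lambda>p. norm (w (fst p) - w (snd p)) / dist (fst p) (snd p) powr \<beta>"
  have "bdd_above (?q ` {(x, y). x \<in> \<Omega> \<and> y \<in> \<Omega> \<and> x \<noteq> y})"
    using C by (intro bdd_aboveI2[where M = C]) (auto simp: pos_divide_le_eq)
  then have "?q (x, y) \<le> holder_seminorm \<beta> \<Omega> w"
    unfolding holder_seminorm_def using assms(2-4) by (intro cSUP_upper) auto
  then show ?thesis by simp
qed

lemma holder_seminorm_nonneg:
  assumes "holder_continuous_on \<beta> \<Omega> w" "x \<in> \<Omega>" "y \<in> \<Omega>" "x \<noteq> y"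
  shows "0 \<le> holder_seminorm \<beta> \<Omega> w"
proof -
  have "0 \<le> norm (w x - w y) / dist x y powr \<beta>" by simp
  then show ?thesis using holder_quotient_le_holder_seminorm[OF assms] by linarith
qed

lemma holder_seminorm_comp_Lipschitz_le:
  assumes "\<exists>x\<in>\<Omega>. \<exists>y\<in>\<Omega>. x \<noteq> y" "holder_continuous_on \<beta> \<Omega> w" "0 \<le> L"
    and Lipschitz: "\<And>x y. x \<in> \<Omega> \<Longrightarrow> y \<in> \<Omega> \<Longrightarrow> norm (f (w x) - f (w y)) \<le> L * norm (w x - w y)"
  shows "holder_seminorm \<beta> \<Omega> (\<lambda>x. f (w x)) \<le> L * holder_seminorm \<beta> \<Omega> w"
  unfolding holder_seminorm_def [of \<beta> \<Omega> "\<lambda>x. f (w x)"]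
proof (rule cSUP_least)
  show "{(x, y). x \<in> \<Omega> \<and> y \<in> \<Omega> \<and> x \<noteq> y} \<noteq> {}" using assms(1) by auto
next
  fix p assume "p \<in> {(x, y). x \<in> \<Omega> \<and> y \<in> \<Omega> \<and> x \<noteq> y}"
  then obtain x y where p: "p = (x, y)" "x \<in> \<Omega>" "y \<in> \<Omega>" "x \<noteq> y" by auto
  have "norm (f (w x) - f (w y)) / dist x y powr \<beta> \<le> L * (norm (w x - w y) / dist x y powr \<beta>)"
    using Lipschitz[OF p(2,3)] by (simp add: divide_right_mono)
  also have "\<dots> \<le> L * holder_seminorm \<beta> \<Omega> w"
    using holder_quotient_le_holder_seminorm[OF assms(2) p(2-4)] assms(3) by (rule mult_left_mono)
  finally show "norm (f (w (fst p)) - f (w (snd p))) / dist (fst p) (snd p) powr \<beta>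
      \<le> L * holder_seminorm \<beta> \<Omega> w" using p(1) by simp
qed

lemma powr_le_max_endpoints:
  fixes l x M s :: real
  assumes "0 < l" "l \<le> x" "x \<le> M"
  shows "x powr s \<le> max (l powr s) (M powr s)"
proof (cases "0 \<le> s")
  case True
  then have "x powr s \<le> M powr s" using assms by (intro powr_mono2) auto
  then show ?thesis by linarith
next
  case False
  then have "x powr s \<le> l powr s" using assms by (intro powr_mono2') auto
  then show ?thesis by linarith
qed

lemma powr_Lipschitz_on_interval:
  fixes l M x y s :: real
  assumes "0 < l" "x \<in> {l..M}" "y \<in> {l..M}"
  shows "\<bar>x powr s - y powr s\<bar> \<le> \<bar>s\<bar> * max (l powr (s - 1)) (M powr (s - 1)) * \<bar>x - y\<bar>"
proof -
  have "norm (x powr s - y powr s) \<le> \<bar>s\<bar> * max (l powr (s - 1)) (M powr (s - 1)) * norm (x - y)"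
  proof (rule field_differentiable_bound[where f' = "\<lambda>z. s * z powr (s - 1)"])
    fix z assume z: "z \<in> {l..M}"
    show "((\<lambda>z. z powr s) has_field_derivative s * z powr (s - 1)) (at z within {l..M})"
      using z assms(1) by (intro has_field_derivative_at_within[OF has_real_derivative_powr]) auto
    have "z powr (s - 1) \<le> max (l powr (s - 1)) (M powr (s - 1))"
      using z assms(1) by (intro powr_le_max_endpoints) auto
    then show "norm (s * z powr (s - 1)) \<le> \<bar>s\<bar> * max (l powr (s - 1)) (M powr (s - 1))"
      by (simp add: abs_mult mult_left_mono)
  qed (use assms in auto)
  then show ?thesis by simp
qed

lemma holder_norm_norm_powr_le:
  assumes "\<exists>x\<in>\<Omega>. \<exists>y\<in>\<Omega>. x \<noteq> y" "holder_continuous_on \<beta> \<Omega> w" "bounded (w ` \<Omega>)"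
    and "0 < l" "\<And>x. x \<in> \<Omega> \<Longrightarrow> l \<le> norm (w x)"
  shows "holder_norm \<beta> \<Omega> (\<lambda>x. norm (w x) powr s)
    \<le> max (l powr s) (sup_norm \<Omega> w powr s)
      + \<bar>s\<bar> * max (l powr (s - 1)) (sup_norm \<Omega> w powr (s - 1)) * holder_seminorm \<beta> \<Omega> w"
proof -
  let ?M = "sup_norm \<Omega> w"
  let ?K = "\<bar>s\<bar> * max (l powr (s - 1)) (?M powr (s - 1))"
  have range: "norm (w x) \<in> {l..?M}" if "x \<in> \<Omega>" for x
    using sup_norm_upper[OF assms(3) that] assms(5)[OF that] by simp
  have "sup_norm \<Omega> (\<lambda>x. norm (w x) powr s) \<le> max (l powr s) (?M powr s)"
  proof (rule sup_norm_le)
    fix x assume "x \<in> \<Omega>"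
    then show "norm (norm (w x) powr s) \<le> max (l powr s) (?M powr s)"
      using range assms(4) by (simp add: powr_le_max_endpoints)
  qed (use assms(1) in auto)
  moreover have "holder_seminorm \<beta> \<Omega> (\<lambda>x. norm (w x) powr s) \<le> ?K * holder_seminorm \<beta> \<Omega> w"
  proof (rule holder_seminorm_comp_Lipschitz_le[where f = "\<lambda>v. norm v powr s"])
    show "0 \<le> ?K" by (simp add: le_max_iff_disj)
    fix x y assume "x \<in> \<Omega>" "y \<in> \<Omega>"
    then have "\<bar>norm (w x) powr s - norm (w y) powr s\<bar> \<le> ?K * \<bar>norm (w x) - norm (w y)\<bar>"
      using assms(4) range by (intro powr_Lipschitz_on_interval)
    also have "\<dots> \<le> ?K * norm (w x - w y)"
      by (intro mult_left_mono norm_triangle_ineq3) (simp add: le_max_iff_disj)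
    finally show "norm (norm (w x) powr s - norm (w y) powr s) \<le> ?K * norm (w x - w y)" by simp
  qed (use assms(1,2) in auto)
  ultimately show ?thesis unfolding holder_norm_def by linarith
qed

lemma one_le_two_power_k_idx_mult:
  fixes t :: real
  assumes "0 < t" "t < 1"
  shows "1 \<le> 2 ^ k_idx t * t"
proof -
  have "\<bar>ln t\<bar> / ln 2 \<le> real (k_idx t)"
    unfolding k_idx_def by (rule LeastI_ex) (rule real_arch_simple)
  then have "- ln t \<le> real (k_idx t) * ln 2"
    using assms by (simp add: field_simps)
  then have "0 \<le> ln (2 ^ k_idx t * t)"
    using assms by (simp add: ln_mult ln_realpow)
  then show ?thesis using assms by (simp add: ln_ge_zero_iff)
qed

lemma prod_powr_power2_exponents:
  fixes l a :: real
  assumes "0 < l"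
  shows "(\<Prod>j=1..k. l powr (2 ^ (j - 1) * a)) = l powr ((2 ^ k - 1) * a)"
proof (induction k)
  case (Suc k)
  have "(\<Prod>j=1..Suc k. l powr (2 ^ (j - 1) * a)) = l powr ((2 ^ k - 1) * a) * l powr (2 ^ k * a)"
    using Suc by (simp add: prod.nat_ivl_Suc' mult.commute)
  also have "\<dots> = l powr ((2 ^ Suc k - 1) * a)"
    by (simp add: powr_add[symmetric] algebra_simps)
  finally show ?case .
qed (use assms in simp)

lemma divide_le_powr_divide:
  fixes l N H e :: real
  assumes "0 < l" "l \<le> N" "0 \<le> H" "H \<le> N" "1 \<le> e"
  shows "H / l \<le> (N / l) powr e"
proof -
  have "H / l \<le> N / l" using assms by (simp add: divide_right_mono)
  also have "\<dots> = (N / l) powr 1" using assms by simp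
  also have "\<dots> \<le> (N / l) powr e" using assms by (intro powr_mono) auto
  finally show ?thesis .
qed

(* In the estimates below, M and H play the roles of the sup norm and the Hoelder seminorm of Du,
   so that M + H is its Hoelder norm; the left-hand side is the bound of holder_norm_norm_powr_le. *)

lemma norm_powr_estimate_ge_one:
  fixes l M H s :: real
  assumes "1 \<le> s" "0 < l" "l \<le> M" "0 \<le> H"
  shows "max (l powr s) (M powr s) + \<bar>s\<bar> * max (l powr (s - 1)) (M powr (s - 1)) * H
    \<le> M powr s + 2 * s * (M + H) powr s"
proof -
  have max_s: "max (l powr s) (M powr s) = M powr s"
    using assms by (intro max_absorb2 powr_mono2) auto
  have max_s1: "max (l powr (s - 1)) (M powr (s - 1)) = M powr (s - 1)"
    using assms by (intro max_absorb2 powr_mono2) auto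
  have "\<bar>s\<bar> * M powr (s - 1) * H = s * (M powr (s - 1) * H)"
    using assms by simp
  also have "\<dots> \<le> s * ((M + H) powr (s - 1) * (M + H))"
    using assms by (intro mult_left_mono mult_mono powr_mono2) auto
  also have "\<dots> = s * (M + H) powr s"
    using assms by (simp add: powr_diff)
  also have "\<dots> \<le> 2 * s * (M + H) powr s"
    using assms by (intro mult_right_mono) auto
  finally show ?thesis unfolding max_s max_s1 by simp
qed

lemma norm_powr_estimate_pos_lt_one:
  fixes l M H s :: real
  assumes "0 < s" "s < 1" "0 < l" "l \<le> M" "0 \<le> H"
  shows "max (l powr s) (M powr s) + \<bar>s\<bar> * max (l powr (s - 1)) (M powr (s - 1)) * H
    \<le> M powr s + 2 * s / (\<Prod>j=1..k_idx s. l powr (2 ^ (j - 1) * s)) * (M + H) powr (2 ^ k_idx s * s)"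
proof -
  define e where "e = 2 ^ k_idx s * s"
  have max_s: "max (l powr s) (M powr s) = M powr s"
    using assms by (intro max_absorb2 powr_mono2) auto
  have max_s1: "max (l powr (s - 1)) (M powr (s - 1)) = l powr (s - 1)"
    using assms by (intro max_absorb1 powr_mono2') auto
  have "\<bar>s\<bar> * l powr (s - 1) * H = s * l powr s * (H / l)"
    using assms by (simp add: powr_diff)
  also have "\<dots> \<le> s * l powr s * ((M + H) / l) powr e"
    unfolding e_def using assms one_le_two_power_k_idx_mult[of s]
    by (intro mult_left_mono divide_le_powr_divide) auto
  also have "\<dots> = s / (\<Prod>j=1..k_idx s. l powr (2 ^ (j - 1) * s)) * (M + H) powr e"
    unfolding prod_powr_power2_exponents[OF \<open>0 < l\<close>] e_def using assms
    by (simp add: powr_divide powr_diff algebra_simps)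
  also have "\<dots> \<le> 2 * s / (\<Prod>j=1..k_idx s. l powr (2 ^ (j - 1) * s)) * (M + H) powr e"
    using assms by (intro mult_right_mono divide_right_mono) (auto simp: prod_nonneg)
  finally show ?thesis unfolding max_s max_s1 e_def by simp
qed

lemma norm_powr_estimate_neg_gt_minus_one:
  fixes l M H s :: real
  assumes "-1 < s" "s < 0" "0 < l" "l \<le> M" "0 \<le> H"
  shows "max (l powr s) (M powr s) + \<bar>s\<bar> * max (l powr (s - 1)) (M powr (s - 1)) * H
    \<le> l powr s + 2 * \<bar>s\<bar> / (l powr (2 * \<bar>s\<bar>) * (\<Prod>j=1..k_idx \<bar>s\<bar>. l powr (2 ^ (j - 1) * \<bar>s\<bar>)))
        * (M + H) powr (2 ^ k_idx \<bar>s\<bar> * \<bar>s\<bar>)"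
proof -
  define a where "a = \<bar>s\<bar>"
  define k where "k = k_idx a"
  have a: "0 < a" "a < 1" "s = - a" using assms unfolding a_def by auto
  have max_s: "max (l powr s) (M powr s) = l powr s"
    using assms by (intro max_absorb1 powr_mono2') auto
  have max_s1: "max (l powr (s - 1)) (M powr (s - 1)) = l powr (s - 1)"
    using assms by (intro max_absorb1 powr_mono2') auto
  have "\<bar>s\<bar> * l powr (s - 1) * H = a * l powr s * (H / l)"
    unfolding a_def using assms by (simp add: powr_diff)
  also have "\<dots> \<le> a * l powr s * ((M + H) / l) powr (2 ^ k * a)"
    unfolding k_def using a assms one_le_two_power_k_idx_mult[of a]
    by (intro mult_left_mono divide_le_powr_divide) auto
  also have "\<dots> = a / (l powr (2 * a) * (\<Prod>j=1..k. l powr (2 ^ (j - 1) * a))) * (M + H) powr (2 ^ k * a)"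
  proof -
    have "l powr (2 * a) * l powr ((2 ^ k - 1) * a) = l powr a * l powr (2 ^ k * a)"
      by (simp add: powr_add[symmetric] algebra_simps)
    then show ?thesis
      unfolding prod_powr_power2_exponents[OF \<open>0 < l\<close>] \<open>s = - a\<close> powr_minus powr_divide
      using assms by (simp add: field_simps)
  qed
  also have "\<dots> \<le> 2 * a / (l powr (2 * a) * (\<Prod>j=1..k. l powr (2 ^ (j - 1) * a))) * (M + H) powr (2 ^ k * a)"
    using a by (intro mult_right_mono divide_right_mono) (auto simp: prod_nonneg)
  finally show ?thesis unfolding max_s max_s1 a_def k_def by simp
qed

lemma norm_powr_estimate_le_minus_one:
  fixes l M H s :: real
  assumes "s \<le> -1" "0 < l" "l \<le> M" "0 \<le> H"
  shows "max (l powr s) (M powr s) + \<bar>s\<bar> * max (l powr (s - 1)) (M powr (s - 1)) * H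
    \<le> l powr s + 2 * \<bar>s\<bar> * l powr (2 * s) * (M + H) powr \<bar>s\<bar>"
proof -
  have max_s: "max (l powr s) (M powr s) = l powr s"
    using assms by (intro max_absorb1 powr_mono2') auto
  have max_s1: "max (l powr (s - 1)) (M powr (s - 1)) = l powr (s - 1)"
    using assms by (intro max_absorb1 powr_mono2') auto
  have "\<bar>s\<bar> * l powr (s - 1) * H = \<bar>s\<bar> * l powr (2 * s) * (l powr (\<bar>s\<bar> - 1) * H)"
    using assms by (simp add: powr_add[symmetric])
  also have "\<dots> \<le> \<bar>s\<bar> * l powr (2 * s) * ((M + H) powr (\<bar>s\<bar> - 1) * (M + H))"
    using assms by (intro mult_left_mono mult_mono powr_mono2) (auto simp: mult_nonpos_nonneg)
  also have "\<dots> = \<bar>s\<bar> * l powr (2 * s) * (M + H) powr \<bar>s\<bar>"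
    using assms by (simp add: powr_diff)
  also have "\<dots> \<le> 2 * \<bar>s\<bar> * l powr (2 * s) * (M + H) powr \<bar>s\<bar>"
    by (intro mult_right_mono) auto
  finally show ?thesis unfolding max_s max_s1 by simp
qed

theorem lemma4p1:
  fixes \<Omega> :: "'a::euclidean_space set" and u :: "'a \<Rightarrow> real" and Du :: "'a \<Rightarrow> 'a"
    and \<beta> s lambda1 :: real
  assumes "smooth_bounded_domain \<Omega>"
    and "0 < \<beta>" and "\<beta> < 1" and "s \<noteq> 0"
    and "C1_holder \<beta> \<Omega> u Du"
    and "0 < lambda1" and "\<forall>x\<in>\<Omega>. norm (Du x) \<ge> lambda1"
  shows "(s \<ge> 1 \<longrightarrow>
           holder_norm \<beta> \<Omega> (\<lambda>x. norm (Du x) powr s)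
             \<le> sup_norm \<Omega> Du powr s + 2 * s * holder_norm \<beta> \<Omega> Du powr s)
       \<and> (0 < s \<and> s < 1 \<longrightarrow>
           holder_norm \<beta> \<Omega> (\<lambda>x. norm (Du x) powr s)
             \<le> sup_norm \<Omega> Du powr s
                + 2 * s / (\<Prod>j=1..k_idx s. lambda1 powr (2 ^ (j - 1) * s))
                  * holder_norm \<beta> \<Omega> Du powr (2 ^ k_idx s * s))
       \<and> (-1 < s \<and> s < 0 \<longrightarrow>
           holder_norm \<beta> \<Omega> (\<lambda>x. norm (Du x) powr s)
             \<le> lambda1 powr s
                + 2 * \<bar>s\<bar> / (lambda1 powr (2 * \<bar>s\<bar>) * (\<Prod>j=1..k_idx \<bar>s\<bar>. lambda1 powr (2 ^ (j - 1) * \<bar>s\<bar>)))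
                  * holder_norm \<beta> \<Omega> Du powr (2 ^ k_idx \<bar>s\<bar> * \<bar>s\<bar>))
       \<and> (s \<le> -1 \<longrightarrow>
           holder_norm \<beta> \<Omega> (\<lambda>x. norm (Du x) powr s)
             \<le> lambda1 powr s + 2 * \<bar>s\<bar> * lambda1 powr (2 * s) * holder_norm \<beta> \<Omega> Du powr \<bar>s\<bar>)"
proof -
  let ?M = "sup_norm \<Omega> Du" and ?H = "holder_seminorm \<beta> \<Omega> Du"
  have "open \<Omega>" "\<Omega> \<noteq> {}" using assms(1) unfolding smooth_bounded_domain_def by auto
  then have "infinite \<Omega>" using finite_imp_not_open by blast
  then obtain x y where xy: "x \<in> \<Omega>" "y \<in> \<Omega>" "x \<noteq> y"
    by (metis Diff_iff ex_in_conv finite.emptyI infinite_remove singletonI)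
  have Du: "holder_continuous_on \<beta> \<Omega> Du" "bounded (Du ` \<Omega>)"
    using assms(5) unfolding C1_holder_def holder_continuous_on_def by auto
  have lM: "lambda1 \<le> ?M" using assms(7) sup_norm_upper[OF Du(2) xy(1)] xy(1) by force
  have H: "0 \<le> ?H" using holder_seminorm_nonneg[OF Du(1) xy] .
  have bound: "holder_norm \<beta> \<Omega> (\<lambda>x. norm (Du x) powr s)
      \<le> max (lambda1 powr s) (?M powr s)
        + \<bar>s\<bar> * max (lambda1 powr (s - 1)) (?M powr (s - 1)) * ?H"
    using xy Du assms(6,7) by (intro holder_norm_norm_powr_le) auto
  have "holder_norm \<beta> \<Omega> Du = ?M + ?H" by (simp add: holder_norm_def)
  then show ?thesis
    using order_trans[OF bound norm_powr_estimate_ge_one[OF _ assms(6) lM H]]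
      order_trans[OF bound norm_powr_estimate_pos_lt_one[OF _ _ assms(6) lM H]]
      order_trans[OF bound norm_powr_estimate_neg_gt_minus_one[OF _ _ assms(6) lM H]]
      order_trans[OF bound norm_powr_estimate_le_minus_one[OF _ assms(6) lM H]]
    by simp
qed

end
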